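(* Let $\varphi$ be a Boolean formula in 3-CNF with $m$ clauses and $n$ variables, and let $G$ be the graph constructed from $\varphi$ as described in the context, with $k = 14m+3n$. Then $\varphi$ is satisfiable if and only if $\mathrm{vc}(G)\le k$.
   Context: Let $\varphi$ consist of clauses $C_1,\dots,C_m$ over variables $x_1,\dots,x_n$, each clause containing exactly three literals, $C_i=(L_i^1\vee L_i^2\vee L_i^3)$. The graph $G$ has vertex set $\{u_{r,s,i}: r\in\{1,2,3\}, s\in\{1,\dots,7\}, i\in\{1,\dots,m\}\}\cup\{v_{r,s,j}: r\in\{1,2\}, s\in\{1,2,3\}, j\in\{1,\dots,n\}\}$ and edge set consisting of: $\{u_{r,s,i},u_{r',s',i}\}$ for all $r\ne r'$ in $\{1,2,3\}$, all $s,s'\in\{1,\dots,7\}$, all $i$; $\{v_{1,s,j},v_{2,s',j}\}$ for all $s,s'\in\{1,2,3\}$, all $j$; $\{u_{r,s,i},v_{1,s',j}\}$ for all $s\in\{1,\dots,7\}$, $s'\in\{1,2,3\}$ whenever $L_i^r = x_j$; and $\{u_{r,s,i},v_{2,s',j}\}$ for all $s\in\{1,\dots,7\}$, $s'\in\{1,2,3\}$ whenever $L_i^r=\neg x_j$. $\mathrm{vc}(G)$ is the minimum size of a vertex cover of $G$ (a set of vertices containing at least one endpoint of every edge). *)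

theory Defs
  imports Main
begin

datatype lit = Pos nat | Neg nat

type_synonym clause = "lit \<times> lit \<times> lit"

fun lit_var :: "lit \<Rightarrow> nat" where
  "lit_var (Pos j) = j" | "lit_var (Neg j) = j"

fun lit_val :: "(nat \<Rightarrow> bool) \<Rightarrow> lit \<Rightarrow> bool" where
  "lit_val a (Pos j) = a j" | "lit_val a (Neg j) = (\<not> a j)"

text \<open>The r-th literal (r in {1,2,3}) of the i-th clause (i in {1..m}).\<close>
definition L :: "clause list \<Rightarrow> nat \<Rightarrow> nat \<Rightarrow> lit" where
  "L cs i r = (let (a, b, c) = cs ! (i - 1) in if r = 1 then a else if r = 2 then b else c)"

definition wf_3cnf :: "nat \<Rightarrow> clause list \<Rightarrow> bool" where
  "wf_3cnf n cs = (\<forall>i\<in>{1..length cs}. \<forall>r\<in>{1,2,3::nat}. lit_var (L cs i r) \<in> {1..n})"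

definition satisfiable :: "clause list \<Rightarrow> bool" where
  "satisfiable cs = (\<exists>a. \<forall>i\<in>{1..length cs}. \<exists>r\<in>{1,2,3::nat}. lit_val a (L cs i r))"

datatype vertex = U nat nat nat | V nat nat nat

definition verts :: "nat \<Rightarrow> clause list \<Rightarrow> vertex set" where
  "verts n cs = {U r s i | r s i. r \<in> {1,2,3} \<and> s \<in> {1..7} \<and> i \<in> {1..length cs}}
              \<union> {V r s j | r s j. r \<in> {1,2} \<and> s \<in> {1,2,3} \<and> j \<in> {1..n}}"

definition edges :: "nat \<Rightarrow> clause list \<Rightarrow> vertex set set" where
  "edges n cs =
     {{U r s i, U r' s' i} | r r' s s' i. r \<in> {1,2,3} \<and> r' \<in> {1,2,3} \<and> r \<noteq> r'
          \<and> s \<in> {1..7} \<and> s' \<in> {1..7} \<and> i \<in> {1..length cs}}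
   \<union> {{V 1 s j, V 2 s' j} | s s' j. s \<in> {1,2,3} \<and> s' \<in> {1,2,3} \<and> j \<in> {1..n}}
   \<union> {{U r s i, V 1 s' j} | r s s' i j. r \<in> {1,2,3} \<and> s \<in> {1..7} \<and> s' \<in> {1,2,3}
          \<and> i \<in> {1..length cs} \<and> j \<in> {1..n} \<and> L cs i r = Pos j}
   \<union> {{U r s i, V 2 s' j} | r s s' i j. r \<in> {1,2,3} \<and> s \<in> {1..7} \<and> s' \<in> {1,2,3}
          \<and> i \<in> {1..length cs} \<and> j \<in> {1..n} \<and> L cs i r = Neg j}"

definition is_vertex_cover :: "'v set \<Rightarrow> 'v set set \<Rightarrow> 'v set \<Rightarrow> bool" where
  "is_vertex_cover Vs E C = (C \<subseteq> Vs \<and> (\<forall>e\<in>E. e \<inter> C \<noteq> {}))"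

text \<open>Minimum size of a vertex cover (the graph is finite, Vs itself is a cover).\<close>
definition vc :: "'v set \<Rightarrow> 'v set set \<Rightarrow> nat" where
  "vc Vs E = Min {card C | C. is_vertex_cover Vs E C}"

end

theory Submission
  imports Defs
begin

text \<open>Each clause gadget is a complete tripartite graph K(7,7,7) and each variable gadget a
  complete bipartite graph K(3,3). A vertex cover must contain all parts but one of a complete
  multipartite graph, so it meets every clause gadget in at least 14 and every variable gadget in
  at least 3 vertices; the gadgets are disjoint, so a cover of size 14m + 3n is tight on every
  gadget. Tightness means that each clause gadget has a part avoided by the cover and each
  variable gadget has exactly one side inside it. Reading x_j as true iff side 1 of its gadget is
  in the cover, the edges from an avoided part r of clause i force the side of the literal
  L_i^r into the cover, i.e. make that literal true. Conversely, a satisfying assignment yields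
  the cover consisting of the true side of every variable gadget and, for every clause, the two
  parts other than one of a true literal.\<close>

lemma complete_multipartite_cover_all_but_one:
  assumes "R \<noteq> {}"
    and cover: "\<And>r r' x y. r \<in> R \<Longrightarrow> r' \<in> R \<Longrightarrow> r \<noteq> r' \<Longrightarrow>
      x \<in> P r \<Longrightarrow> y \<in> P r' \<Longrightarrow> x \<in> C \<or> y \<in> C"
  shows "\<exists>r\<^sub>0\<in>R. \<forall>r\<in>R - {r\<^sub>0}. P r \<subseteq> C"
proof (cases "\<forall>r\<in>R. P r \<subseteq> C")
  case True
  with \<open>R \<noteq> {}\<close> show ?thesis by blast
next
  case False
  then obtain r\<^sub>0 x where "r\<^sub>0 \<in> R" "x \<in> P r\<^sub>0" "x \<notin> C" by blast
  then have "P r \<subseteq> C" if "r \<in> R - {r\<^sub>0}" for r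
    using cover[of r\<^sub>0 r x] that by blast
  with \<open>r\<^sub>0 \<in> R\<close> show ?thesis by blast
qed

lemma card_complete_multipartite_cover:
  assumes "finite R" "R \<noteq> {}"
    and disjoint: "\<And>r r'. r \<in> R \<Longrightarrow> r' \<in> R \<Longrightarrow> r \<noteq> r' \<Longrightarrow> P r \<inter> P r' = {}"
    and card: "\<And>r. r \<in> R \<Longrightarrow> finite (P r) \<and> card (P r) = k"
    and cover: "\<And>r r' x y. r \<in> R \<Longrightarrow> r' \<in> R \<Longrightarrow> r \<noteq> r' \<Longrightarrow>
      x \<in> P r \<Longrightarrow> y \<in> P r' \<Longrightarrow> x \<in> C \<or> y \<in> C"
  obtains r\<^sub>0 where "r\<^sub>0 \<in> R" "\<forall>r\<in>R - {r\<^sub>0}. P r \<subseteq> C"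
    "card (C \<inter> \<Union>(P ` R)) = (card R - 1) * k + card (C \<inter> P r\<^sub>0)"
proof -
  have "\<exists>r\<^sub>0\<in>R. \<forall>r\<in>R - {r\<^sub>0}. P r \<subseteq> C"
    using \<open>R \<noteq> {}\<close> cover by (rule complete_multipartite_cover_all_but_one)
  then obtain r\<^sub>0 where r\<^sub>0: "r\<^sub>0 \<in> R" and full: "\<And>r. r \<in> R - {r\<^sub>0} \<Longrightarrow> P r \<subseteq> C"
    by blast
  have "card (C \<inter> \<Union>(P ` R)) = card (\<Union>r\<in>R. C \<inter> P r)"
    by (simp only: Int_UN_distrib)
  also have "\<dots> = (\<Sum>r\<in>R. card (C \<inter> P r))"
    using \<open>finite R\<close> card disjoint by (intro card_UN_disjoint) auto
  also have "\<dots> = card (C \<inter> P r\<^sub>0) + (\<Sum>r\<in>R - {r\<^sub>0}. card (C \<inter> P r))"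
    using \<open>finite R\<close> r\<^sub>0 by (rule sum.remove)
  also have "(\<Sum>r\<in>R - {r\<^sub>0}. card (C \<inter> P r)) = (\<Sum>r\<in>R - {r\<^sub>0}. k)"
    using full card by (intro sum.cong) (auto simp: Int_absorb1)
  also have "\<dots> = (card R - 1) * k"
    using \<open>finite R\<close> r\<^sub>0 by simp
  finally show ?thesis
    using that r\<^sub>0 full by simp
qed

lemma is_vertex_cover_edge: "is_vertex_cover Vs E C \<Longrightarrow> {x, y} \<in> E \<Longrightarrow> x \<in> C \<or> y \<in> C"
  unfolding is_vertex_cover_def by auto

lemma finite_vertex_cover: "finite Vs \<Longrightarrow> is_vertex_cover Vs E C \<Longrightarrow> finite C"
  unfolding is_vertex_cover_def by (auto intro: finite_subset)

lemma vc_le_card: "finite Vs \<Longrightarrow> is_vertex_cover Vs E C \<Longrightarrow> vc Vs E \<le> card C"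
  unfolding vc_def is_vertex_cover_def by (intro Min_le) (auto intro: finite_subset[of _ "card ` Pow Vs"])

lemma vc_attained:
  assumes "finite Vs" "is_vertex_cover Vs E C"
  obtains C' where "is_vertex_cover Vs E C'" "card C' = vc Vs E"
proof -
  have "finite {card C | C. is_vertex_cover Vs E C}"
    using assms(1) unfolding is_vertex_cover_def by (auto intro: finite_subset[of _ "card ` Pow Vs"])
  then have "vc Vs E \<in> {card C | C. is_vertex_cover Vs E C}"
    unfolding vc_def using assms(2) by (intro Min_in) auto
  then obtain C' where "is_vertex_cover Vs E C'" "card C' = vc Vs E"
    by auto
  then show ?thesis
    by (rule that)
qed

definition clause_part :: "nat \<Rightarrow> nat \<Rightarrow> vertex set" where
  "clause_part r i = (\<lambda>s. U r s i) ` {1..7}"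

definition var_part :: "nat \<Rightarrow> nat \<Rightarrow> vertex set" where
  "var_part b j = (\<lambda>s. V b s j) ` {1,2,3}"

definition clause_gadget :: "nat \<Rightarrow> vertex set" where
  "clause_gadget i = (\<Union>r\<in>{1,2,3}. clause_part r i)"

definition var_gadget :: "nat \<Rightarrow> vertex set" where
  "var_gadget j = (\<Union>b\<in>{1,2}. var_part b j)"

fun lit_side :: "lit \<Rightarrow> nat" where
  "lit_side (Pos j) = 1" | "lit_side (Neg j) = 2"

lemma lit_val_iff_lit_side: "lit_val a l \<longleftrightarrow> lit_side l = (if a (lit_var l) then 1 else 2)"
  by (cases l) auto

lemma finite_clause_part [simp]: "finite (clause_part r i)"
  and card_clause_part [simp]: "card (clause_part r i) = 7"
  unfolding clause_part_def by (auto simp: card_image inj_on_def)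

lemma finite_var_part [simp]: "finite (var_part b j)"
  and card_var_part [simp]: "card (var_part b j) = 3"
  unfolding var_part_def by (auto simp: card_image inj_on_def)

lemma U_in_clause_part_iff [simp]: "U r' s i' \<in> clause_part r i \<longleftrightarrow> r' = r \<and> i' = i \<and> s \<in> {1..7}"
  unfolding clause_part_def by auto

lemma V_in_var_part_iff [simp]: "V b' s j' \<in> var_part b j \<longleftrightarrow> b' = b \<and> j' = j \<and> s \<in> {1,2,3}"
  unfolding var_part_def by auto

lemma verts_eq_gadgets:
  "verts n cs = (\<Union>i\<in>{1..length cs}. clause_gadget i) \<union> (\<Union>j\<in>{1..n}. var_gadget j)"
  unfolding verts_def clause_gadget_def var_gadget_def clause_part_def var_part_def by auto

lemma clause_part_subset_verts: "i \<in> {1..length cs} \<Longrightarrow> r \<in> {1,2,3} \<Longrightarrow> clause_part r i \<subseteq> verts n cs"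
  unfolding verts_eq_gadgets clause_gadget_def by blast

lemma var_part_subset_verts: "j \<in> {1..n} \<Longrightarrow> b \<in> {1,2} \<Longrightarrow> var_part b j \<subseteq> verts n cs"
  unfolding verts_eq_gadgets var_gadget_def by blast

lemma finite_verts: "finite (verts n cs)"
  unfolding verts_eq_gadgets clause_gadget_def var_gadget_def by simp

lemma clause_edge:
  assumes "i \<in> {1..length cs}" "r \<in> {1,2,3}" "r' \<in> {1,2,3}" "r \<noteq> r'"
    and "x \<in> clause_part r i" "y \<in> clause_part r' i"
  shows "{x, y} \<in> edges n cs"
proof -
  have "{U r s i, U r' s' i} \<in> edges n cs" if "s \<in> {1..7}" "s' \<in> {1..7}" for s s'
    unfolding edges_def
    by (intro UnI1) (rule CollectI, intro exI conjI, rule refl, use that assms(1-4) in auto)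
  with assms(5,6) show ?thesis
    unfolding clause_part_def by blast
qed

lemma var_edge:
  assumes "j \<in> {1..n}" "b \<in> {1,2}" "b' \<in> {1,2}" "b \<noteq> b'" "x \<in> var_part b j" "y \<in> var_part b' j"
  shows "{x, y} \<in> edges n cs"
proof -
  have edge: "{V 1 s j, V 2 s' j} \<in> edges n cs" if "s \<in> {1,2,3}" "s' \<in> {1,2,3}" for s s'
    unfolding edges_def
    by (rule UnI1, rule UnI1, rule UnI2) (rule CollectI, intro exI conjI, rule refl, use that assms(1) in auto)
  have "{V b s j, V b' s' j} \<in> edges n cs" if "s \<in> {1,2,3}" "s' \<in> {1,2,3}" for s s'
    using edge[OF that] edge[OF that(2,1)] assms(2-4) by (cases "b = 1") (auto simp: insert_commute)
  with assms(5,6) show ?thesis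
    unfolding var_part_def by blast
qed

lemma literal_edge:
  assumes "i \<in> {1..length cs}" "r \<in> {1,2,3}" "lit_var (L cs i r) \<in> {1..n}"
    and "x \<in> clause_part r i" "y \<in> var_part (lit_side (L cs i r)) (lit_var (L cs i r))"
  shows "{x, y} \<in> edges n cs"
proof -
  have "{U r s i, V (lit_side (L cs i r)) s' (lit_var (L cs i r))} \<in> edges n cs"
    if "s \<in> {1..7}" "s' \<in> {1,2,3}" for s s'
  proof (cases "L cs i r")
    case (Pos j)
    show ?thesis
      unfolding edges_def Pos lit_side.simps lit_var.simps
      by (rule UnI1, rule UnI2) (rule CollectI, intro exI conjI, rule refl, use that assms(1-3) Pos in auto)
  next
    case (Neg j)
    show ?thesis
      unfolding edges_def Neg lit_side.simps lit_var.simps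
      by (rule UnI2) (rule CollectI, intro exI conjI, rule refl, use that assms(1-3) Neg in auto)
  qed
  with assms(4,5) show ?thesis
    unfolding clause_part_def var_part_def by blast
qed

lemma edgesE:
  assumes "e \<in> edges n cs"
  obtains (clause) i r r' x y where "i \<in> {1..length cs}" "r \<in> {1,2,3}" "r' \<in> {1,2,3}" "r \<noteq> r'"
      "x \<in> clause_part r i" "y \<in> clause_part r' i" "e = {x, y}"
    | (var) j x y where "j \<in> {1..n}" "x \<in> var_part 1 j" "y \<in> var_part 2 j" "e = {x, y}"
    | (literal) i r x y where "i \<in> {1..length cs}" "r \<in> {1,2,3}" "lit_var (L cs i r) \<in> {1..n}"
      "x \<in> clause_part r i" "y \<in> var_part (lit_side (L cs i r)) (lit_var (L cs i r))" "e = {x, y}"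
proof -
  from assms consider
      (UU) r r' s s' i where "e = {U r s i, U r' s' i}" "r \<in> {1,2,3}" "r' \<in> {1,2,3}" "r \<noteq> r'"
        "s \<in> {1..7}" "s' \<in> {1..7}" "i \<in> {1..length cs}"
    | (VV) s s' j where "e = {V 1 s j, V 2 s' j}" "s \<in> {1,2,3}" "s' \<in> {1,2,3}" "j \<in> {1..n}"
    | (UV) r s s' i j where "e = {U r s i, V 1 s' j}" "r \<in> {1,2,3}" "s \<in> {1..7}" "s' \<in> {1,2,3}"
        "i \<in> {1..length cs}" "j \<in> {1..n}" "L cs i r = Pos j"
    | (UV') r s s' i j where "e = {U r s i, V 2 s' j}" "r \<in> {1,2,3}" "s \<in> {1..7}" "s' \<in> {1,2,3}"
        "i \<in> {1..length cs}" "j \<in> {1..n}" "L cs i r = Neg j"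
    unfolding edges_def by blast
  then show ?thesis
  proof cases
    case UU
    then show ?thesis by (intro clause[of i r r' "U r s i" "U r' s' i"]) simp_all
  next
    case VV
    then show ?thesis by (intro var[of j "V 1 s j" "V 2 s' j"]) simp_all
  next
    case UV
    then show ?thesis by (intro literal[of i r "U r s i" "V 1 s' j"]) simp_all
  next
    case UV'
    then show ?thesis by (intro literal[of i r "U r s i" "V 2 s' j"]) simp_all
  qed
qed

lemma verts_is_vertex_cover: "is_vertex_cover (verts n cs) (edges n cs) (verts n cs)"
  unfolding is_vertex_cover_def
proof (intro conjI ballI subset_refl)
  fix e assume "e \<in> edges n cs"
  then obtain x y where "e = {x, y}" "x \<in> verts n cs"
  proof (cases rule: edgesE)
    case (clause i r r' x y)
    then show ?thesis using that clause_part_subset_verts[of i cs r n] by blast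
  next
    case (var j x y)
    then show ?thesis using that var_part_subset_verts[of j n 1 cs] by blast
  next
    case (literal i r x y)
    then show ?thesis using that clause_part_subset_verts[of i cs r n] by blast
  qed
  then show "e \<inter> verts n cs \<noteq> {}"
    by blast
qed

lemma clause_gadget_cover:
  assumes "is_vertex_cover (verts n cs) (edges n cs) C" "i \<in> {1..length cs}"
  obtains r where "r \<in> {1,2,3}" "card (C \<inter> clause_gadget i) = 14 + card (C \<inter> clause_part r i)"
proof (rule card_complete_multipartite_cover[of "{1,2,3}" "\<lambda>r. clause_part r i" 7 C])
  show "clause_part r i \<inter> clause_part r' i = {}" if "r \<noteq> r'" for r r'
    using that by (auto simp: clause_part_def)
  show "x \<in> C \<or> y \<in> C"
    if "r \<in> {1,2,3}" "r' \<in> {1,2,3}" "r \<noteq> r'" "x \<in> clause_part r i" "y \<in> clause_part r' i" for r r' x y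
    using is_vertex_cover_edge[OF assms(1) clause_edge[OF assms(2) that]] .
qed (use that in \<open>auto simp: clause_gadget_def\<close>)

lemma var_gadget_cover:
  assumes "is_vertex_cover (verts n cs) (edges n cs) C" "j \<in> {1..n}"
  obtains b where "b \<in> {1,2}" "\<forall>b'\<in>{1,2} - {b}. var_part b' j \<subseteq> C"
    "card (C \<inter> var_gadget j) = 3 + card (C \<inter> var_part b j)"
proof (rule card_complete_multipartite_cover[of "{1,2}" "\<lambda>b. var_part b j" 3 C])
  show "var_part b j \<inter> var_part b' j = {}" if "b \<noteq> b'" for b b'
    using that by (auto simp: var_part_def)
  show "x \<in> C \<or> y \<in> C"
    if "b \<in> {1,2}" "b' \<in> {1,2}" "b \<noteq> b'" "x \<in> var_part b j" "y \<in> var_part b' j" for b b' x y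
    using is_vertex_cover_edge[OF assms(1) var_edge[OF assms(2) that]] .
qed (use that in \<open>auto simp: var_gadget_def\<close>)

lemma sum_card_gadgets_le:
  assumes "finite C"
  shows "(\<Sum>i\<in>{1..m}. card (C \<inter> clause_gadget i)) + (\<Sum>j\<in>{1..n}. card (C \<inter> var_gadget j))
    \<le> card C"
proof -
  have "(\<Sum>i\<in>{1..m}. card (C \<inter> clause_gadget i)) = card (\<Union>i\<in>{1..m}. C \<inter> clause_gadget i)"
    using assms by (intro card_UN_disjoint[symmetric]) (auto simp: clause_gadget_def clause_part_def)
  moreover have "(\<Sum>j\<in>{1..n}. card (C \<inter> var_gadget j)) = card (\<Union>j\<in>{1..n}. C \<inter> var_gadget j)"
    using assms by (intro card_UN_disjoint[symmetric]) (auto simp: var_gadget_def var_part_def)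
  moreover have "card (\<Union>i\<in>{1..m}. C \<inter> clause_gadget i) + card (\<Union>j\<in>{1..n}. C \<inter> var_gadget j)
      = card ((\<Union>i\<in>{1..m}. C \<inter> clause_gadget i) \<union> (\<Union>j\<in>{1..n}. C \<inter> var_gadget j))"
    using assms
    by (intro card_Un_disjoint[symmetric])
      (auto simp: clause_gadget_def var_gadget_def clause_part_def var_part_def)
  moreover have "\<dots> \<le> card C"
    using assms by (intro card_mono) auto
  ultimately show ?thesis
    by simp
qed

lemma small_cover_tight_on_gadgets:
  assumes cover: "is_vertex_cover (verts n cs) (edges n cs) C"
    and small: "card C \<le> 14 * length cs + 3 * n"
  shows "\<forall>i\<in>{1..length cs}. card (C \<inter> clause_gadget i) = 14"
    and "\<forall>j\<in>{1..n}. card (C \<inter> var_gadget j) = 3"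
proof -
  have "finite C"
    using finite_verts cover by (rule finite_vertex_cover)
  have clause_ge: "14 \<le> card (C \<inter> clause_gadget i)" if "i \<in> {1..length cs}" for i
    using clause_gadget_cover[OF cover that] by (metis le_add1)
  have var_ge: "3 \<le> card (C \<inter> var_gadget j)" if "j \<in> {1..n}" for j
    using var_gadget_cover[OF cover that] by (metis le_add1)
  have "(\<Sum>i\<in>{1..length cs}. 14) \<le> (\<Sum>i\<in>{1..length cs}. card (C \<inter> clause_gadget i))"
    using clause_ge by (rule sum_mono)
  moreover have "(\<Sum>j\<in>{1..n}. 3) \<le> (\<Sum>j\<in>{1..n}. card (C \<inter> var_gadget j))"
    using var_ge by (rule sum_mono)
  moreover have "(\<Sum>i\<in>{1..length cs}. card (C \<inter> clause_gadget i)) + (\<Sum>j\<in>{1..n}. card (C \<inter> var_gadget j))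
      \<le> (\<Sum>i\<in>{1..length cs}. 14) + (\<Sum>j\<in>{1..n}. 3)"
    using sum_card_gadgets_le[OF \<open>finite C\<close>, of "length cs" n] small by simp
  ultimately have clause_sum: "(\<Sum>i\<in>{1..length cs}. 14) = (\<Sum>i\<in>{1..length cs}. card (C \<inter> clause_gadget i))"
    and var_sum: "(\<Sum>j\<in>{1..n}. 3) = (\<Sum>j\<in>{1..n}. card (C \<inter> var_gadget j))"
    by linarith+
  show "\<forall>i\<in>{1..length cs}. card (C \<inter> clause_gadget i) = 14"
    using sum_mono_inv[OF clause_sum clause_ge] by fastforce
  show "\<forall>j\<in>{1..n}. card (C \<inter> var_gadget j) = 3"
    using sum_mono_inv[OF var_sum var_ge] by fastforce
qed

lemma small_cover_avoids_clause_part: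
  assumes cover: "is_vertex_cover (verts n cs) (edges n cs) C"
    and small: "card C \<le> 14 * length cs + 3 * n"
    and i: "i \<in> {1..length cs}"
  obtains r where "r \<in> {1,2,3}" "C \<inter> clause_part r i = {}"
proof -
  obtain r where "r \<in> {1,2,3}" "card (C \<inter> clause_gadget i) = 14 + card (C \<inter> clause_part r i)"
    using clause_gadget_cover[OF cover i] .
  moreover have "card (C \<inter> clause_gadget i) = 14"
    using small_cover_tight_on_gadgets(1)[OF cover small] i by blast
  moreover have "finite C"
    using finite_verts cover by (rule finite_vertex_cover)
  ultimately show ?thesis
    using that by simp
qed

lemma small_cover_var_side:
  assumes cover: "is_vertex_cover (verts n cs) (edges n cs) C"
    and small: "card C \<le> 14 * length cs + 3 * n"
    and "j \<in> {1..n}" "b \<in> {1,2}"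
  shows "var_part b j \<subseteq> C \<longleftrightarrow> b = (if var_part 1 j \<subseteq> C then 1 else 2)"
proof -
  obtain b\<^sub>0 where b\<^sub>0: "b\<^sub>0 \<in> {1,2}" and full: "\<forall>b'\<in>{1,2} - {b\<^sub>0}. var_part b' j \<subseteq> C"
    and "card (C \<inter> var_gadget j) = 3 + card (C \<inter> var_part b\<^sub>0 j)"
    using var_gadget_cover[OF cover \<open>j \<in> {1..n}\<close>] .
  moreover have "card (C \<inter> var_gadget j) = 3"
    using small_cover_tight_on_gadgets(2)[OF cover small] \<open>j \<in> {1..n}\<close> by blast
  moreover have "finite C"
    using finite_verts cover by (rule finite_vertex_cover)
  ultimately have "C \<inter> var_part b\<^sub>0 j = {}"
    by simp
  then have "\<not> var_part b\<^sub>0 j \<subseteq> C"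
    by (auto simp: var_part_def)
  with b\<^sub>0 full \<open>b \<in> {1,2}\<close> show ?thesis
    by auto
qed

lemma satisfiable_if_small_cover:
  assumes wf: "wf_3cnf n cs"
    and cover: "is_vertex_cover (verts n cs) (edges n cs) C"
    and small: "card C \<le> 14 * length cs + 3 * n"
  shows "satisfiable cs"
  unfolding satisfiable_def
proof (intro exI ballI)
  fix i assume i: "i \<in> {1..length cs}"
  obtain r where r: "r \<in> {1,2,3}" and avoided: "C \<inter> clause_part r i = {}"
    using small_cover_avoids_clause_part[OF cover small i] .
  define l where "l = L cs i r"
  have j: "lit_var l \<in> {1..n}"
    using wf i r unfolding wf_3cnf_def l_def by blast
  have "var_part (lit_side l) (lit_var l) \<subseteq> C"
  proof
    fix y assume "y \<in> var_part (lit_side l) (lit_var l)"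
    then have "U r 1 i \<in> C \<or> y \<in> C"
      using is_vertex_cover_edge[OF cover literal_edge[OF i r]] j unfolding l_def by simp
    with avoided show "y \<in> C"
      by auto
  qed
  moreover have "lit_side l \<in> {1,2}"
    by (cases l) auto
  ultimately have "lit_val (\<lambda>j. var_part 1 j \<subseteq> C) l"
    using small_cover_var_side[OF cover small j] lit_val_iff_lit_side by blast
  with r show "\<exists>r\<in>{1,2,3}. lit_val (\<lambda>j. var_part 1 j \<subseteq> C) (L cs i r)"
    unfolding l_def by blast
qed

definition assignment_cover :: "nat \<Rightarrow> clause list \<Rightarrow> (nat \<Rightarrow> bool) \<Rightarrow> (nat \<Rightarrow> nat) \<Rightarrow> vertex set" where
  "assignment_cover n cs a p =
     (\<Union>i\<in>{1..length cs}. \<Union>r\<in>{1,2,3} - {p i}. clause_part r i) \<union>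
     (\<Union>j\<in>{1..n}. var_part (if a j then 1 else 2) j)"

lemma card_assignment_cover:
  assumes "\<forall>i\<in>{1..length cs}. p i \<in> {1,2,3}"
  shows "card (assignment_cover n cs a p) \<le> 14 * length cs + 3 * n"
proof -
  have clause_bound: "card (\<Union>r\<in>{1,2,3} - {p i}. clause_part r i) \<le> 14"
    if "i \<in> {1..length cs}" for i
  proof -
    have "card (\<Union>r\<in>{1,2,3} - {p i}. clause_part r i)
        \<le> (\<Sum>r\<in>{1,2,3} - {p i}. card (clause_part r i))"
      by (rule card_UN_le) simp
    also have "\<dots> = 7 * card ({1,2,3::nat} - {p i})"
      by simp
    also have "\<dots> = 14"
      using assms that by (simp add: card_Diff_singleton)
    finally show ?thesis .
  qed
  have "card (\<Union>i\<in>{1..length cs}. \<Union>r\<in>{1,2,3} - {p i}. clause_part r i)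
      \<le> (\<Sum>i\<in>{1..length cs}. card (\<Union>r\<in>{1,2,3} - {p i}. clause_part r i))"
    by (rule card_UN_le) simp
  also have "\<dots> \<le> (\<Sum>i\<in>{1..length cs}. 14)"
    using clause_bound by (rule sum_mono)
  finally have "card (\<Union>i\<in>{1..length cs}. \<Union>r\<in>{1,2,3} - {p i}. clause_part r i) \<le> 14 * length cs"
    by simp
  moreover have "card (\<Union>j\<in>{1..n}. var_part (if a j then 1 else 2) j)
      \<le> (\<Sum>j\<in>{1..n}. card (var_part (if a j then 1 else 2) j))"
    by (rule card_UN_le) simp
  moreover have "card (assignment_cover n cs a p)
      \<le> card (\<Union>i\<in>{1..length cs}. \<Union>r\<in>{1,2,3} - {p i}. clause_part r i)
        + card (\<Union>j\<in>{1..n}. var_part (if a j then 1 else 2) j)"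
    unfolding assignment_cover_def by (rule card_Un_le)
  ultimately show ?thesis
    by simp
qed

lemma clause_part_subset_assignment_cover:
  "i \<in> {1..length cs} \<Longrightarrow> r \<in> {1,2,3} \<Longrightarrow> r \<noteq> p i \<Longrightarrow> clause_part r i \<subseteq> assignment_cover n cs a p"
  unfolding assignment_cover_def by blast

lemma var_part_subset_assignment_cover:
  "j \<in> {1..n} \<Longrightarrow> var_part (if a j then 1 else 2) j \<subseteq> assignment_cover n cs a p"
  unfolding assignment_cover_def by blast

lemma assignment_cover_is_vertex_cover:
  assumes p: "\<forall>i\<in>{1..length cs}. p i \<in> {1,2,3} \<and> lit_val a (L cs i (p i))"
  shows "is_vertex_cover (verts n cs) (edges n cs) (assignment_cover n cs a p)"
  unfolding is_vertex_cover_def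
proof (intro conjI ballI)
  have "clause_part r i \<subseteq> verts n cs" if "i \<in> {1..length cs}" "r \<in> {1,2,3} - {p i}" for i r
    using that by (intro clause_part_subset_verts) auto
  moreover have "var_part (if a j then 1 else 2) j \<subseteq> verts n cs" if "j \<in> {1..n}" for j
    using that by (intro var_part_subset_verts) auto
  ultimately show "assignment_cover n cs a p \<subseteq> verts n cs"
    unfolding assignment_cover_def by blast
next
  fix e assume "e \<in> edges n cs"
  then obtain x y where "e = {x, y}" "x \<in> assignment_cover n cs a p \<or> y \<in> assignment_cover n cs a p"
  proof (cases rule: edgesE)
    case (clause i r r' x y)
    then have "clause_part r i \<subseteq> assignment_cover n cs a p
        \<or> clause_part r' i \<subseteq> assignment_cover n cs a p"
      using clause_part_subset_assignment_cover by metis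
    with clause that show ?thesis
      by blast
  next
    case (var j x y)
    then have "var_part (if a j then 1 else 2) j \<subseteq> assignment_cover n cs a p"
      by (intro var_part_subset_assignment_cover)
    with var that show ?thesis
      by (cases "a j") auto
  next
    case (literal i r x y)
    show ?thesis
    proof (cases "r = p i")
      case True
      then have "lit_side (L cs i r) = (if a (lit_var (L cs i r)) then 1 else 2)"
        using p literal(1) lit_val_iff_lit_side by blast
      then have "var_part (lit_side (L cs i r)) (lit_var (L cs i r)) \<subseteq> assignment_cover n cs a p"
        using var_part_subset_assignment_cover[OF literal(3)] by simp
      with literal that show ?thesis
        by blast
    next
      case False
      then have "clause_part r i \<subseteq> assignment_cover n cs a p"
        using literal(1,2) by (intro clause_part_subset_assignment_cover)
      with literal that show ?thesis
        by blast
    qed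
  qed
  then show "e \<inter> assignment_cover n cs a p \<noteq> {}"
    by blast
qed

theorem lemma13:
  fixes n :: nat and cs :: "clause list"
  assumes "wf_3cnf n cs"
  shows "satisfiable cs \<longleftrightarrow> vc (verts n cs) (edges n cs) \<le> 14 * length cs + 3 * n"
proof
  assume "satisfiable cs"
  then obtain a p where p: "\<forall>i\<in>{1..length cs}. p i \<in> {1,2,3} \<and> lit_val a (L cs i (p i))"
    unfolding satisfiable_def by metis
  have "vc (verts n cs) (edges n cs) \<le> card (assignment_cover n cs a p)"
    using finite_verts assignment_cover_is_vertex_cover[OF p] by (rule vc_le_card)
  also have "\<dots> \<le> 14 * length cs + 3 * n"
    using p by (intro card_assignment_cover) blast
  finally show "vc (verts n cs) (edges n cs) \<le> 14 * length cs + 3 * n" .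
next
  assume "vc (verts n cs) (edges n cs) \<le> 14 * length cs + 3 * n"
  moreover obtain C where "is_vertex_cover (verts n cs) (edges n cs) C" "card C = vc (verts n cs) (edges n cs)"
    using finite_verts verts_is_vertex_cover by (rule vc_attained)
  ultimately show "satisfiable cs"
    using satisfiable_if_small_cover[OF assms] by simp
qed

end
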